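(* (Unconditional stability, 2D multiplicative kernel.) Let $\mathcal A^{\times}=\mathcal D_x\otimes\mathcal D_y-\mathcal G_x\otimes\mathcal G_y$ be the two-dimensional collocation matrix for the multiplicative kernel (see context), $T>0$, $N\ge1$, $\tau=T/N$, and $C_d=\frac{4(b-a)^{1-\gamma}(d-c)^{1-\gamma}}{(1-\gamma)^2}$. If vectors $\varepsilon^0,\dots,\varepsilon^N$ (indexed by $\{1,\dots,2M_x-1\}\times\{1,\dots,2M_y-1\}$) satisfy $$\Big(I+\frac{\tau}{2}\mathcal A^{\times}\Big)\varepsilon^k=\Big(I-\frac{\tau}{2}\mathcal A^{\times}\Big)\varepsilon^{k-1},\qquad k=1,\dots,N,$$ then $\|\varepsilon^k\|_\infty\le e^{TC_d}\|\varepsilon^0\|_\infty$ for all $k=0,\dots,N$, for every $M_x,M_y\ge2$ and every $\tau$.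
   Context: Fix $\gamma\in(0,1)$. For an interval $[\alpha,\beta]$ and an integer $m\ge2$ let $h=(\beta-\alpha)/m$, $x_s=\alpha+sh$ ($s\in\{0,\tfrac12,\dots,m\}$), and let $\phi_{s}$ be the piecewise quadratic Lagrange basis: for integers $0\le l\le m$, $\phi_l(x)=\frac{x-x_{l-1}}{h}\cdot\frac{2x-(x_l+x_{l-1})}{h}$ on $[x_{l-1},x_l]\cap[\alpha,\beta]$, $\phi_l(x)=\frac{x_{l+1}-x}{h}\cdot\frac{(x_{l+1}+x_l)-2x}{h}$ on $[x_l,x_{l+1}]\cap[\alpha,\beta]$, $0$ otherwise; for $l=1,\dots,m$, $\phi_{l-\frac12}(x)=\frac{4(x-x_{l-1})(x_l-x)}{h^2}$ on $[x_{l-1},x_l]$, $0$ otherwise. The associated 1D matrices are $\mathcal D=\mathrm{diag}(d_1,\dots,d_{2m-1})$ and $\mathcal G=(g_{ij})_{i,j=1}^{2m-1}$ with $d_i=\int_\alpha^\beta|x_{i/2}-y|^{-\gamma}dy$ and $g_{ij}=\int_\alpha^\beta\phi_{j/2}(y)|x_{i/2}-y|^{-\gamma}dy$. The following fact, established in earlier work, may be used: all $g_{ij}>0$ and $\mathcal D-\mathcal G$ is strictly diagonally dominant by rows. For $a<b$, $c<d$, $M_x,M_y\ge2$: $\mathcal D_x,\mathcal G_x$ are these matrices for $[a,b]$, $m=M_x$, and $\mathcal D_y,\mathcal G_y$ for $[c,d]$, $m=M_y$, and $\mathcal A^{\times}=\mathcal D_x\otimes\mathcal D_y-\mathcal G_x\otimes\mathcal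 G_y$ (the collocation matrix of $u\mapsto\int_\Omega\frac{u(x,y)-u(\bar x,\bar y)}{|x-\bar x|^\gamma|y-\bar y|^\gamma}d\bar xd\bar y$, $\Omega=(a,b)\times(c,d)$). $\|v\|_\infty$ is the maximum absolute entry. *)

theory Defs
  imports "HOL-Analysis.Analysis"
begin

definition node :: "real \<Rightarrow> real \<Rightarrow> nat \<Rightarrow> real \<Rightarrow> real" where
  "node \<alpha> \<beta> m s = \<alpha> + s * ((\<beta> - \<alpha>) / real m)"

text \<open>Piecewise quadratic Lagrange basis function phi_{j/2} (j a natural number,
  so that the node index j/2 ranges over the half-integers).\<close>
definition qbasis :: "real \<Rightarrow> real \<Rightarrow> nat \<Rightarrow> nat \<Rightarrow> real \<Rightarrow> real" where
  "qbasis \<alpha> \<beta> m j y =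
    (let h = (\<beta> - \<alpha>) / real m; x = node \<alpha> \<beta> m in
     if even j then
       (let l = real (j div 2) in
        if x (l - 1) \<le> y \<and> y \<le> x l \<and> \<alpha> \<le> y \<and> y \<le> \<beta> then
          ((y - x (l - 1)) / h) * ((2 * y - (x l + x (l - 1))) / h)
        else if x l \<le> y \<and> y \<le> x (l + 1) \<and> \<alpha> \<le> y \<and> y \<le> \<beta> then
          ((x (l + 1) - y) / h) * (((x (l + 1) + x l) - 2 * y) / h)
        else 0)
     else
       (let l = real ((j + 1) div 2) in
        if x (l - 1) \<le> y \<and> y \<le> x l then
          4 * (y - x (l - 1)) * (x l - y) / h\<^sup>2
        else 0))"

definition idx :: "nat \<Rightarrow> nat set" where
  "idx m = {1..2 * m - 1}"

definition dcoef :: "real \<Rightarrow> real \<Rightarrow> real \<Rightarrow> nat \<Rightarrow> nat \<Rightarrow> real" where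
  "dcoef \<gamma> \<alpha> \<beta> m i =
     integral {\<alpha>..\<beta>} (\<lambda>y. \<bar>node \<alpha> \<beta> m (real i / 2) - y\<bar> powr (- \<gamma>))"

definition Dmat :: "real \<Rightarrow> real \<Rightarrow> real \<Rightarrow> nat \<Rightarrow> nat \<Rightarrow> nat \<Rightarrow> real" where
  "Dmat \<gamma> \<alpha> \<beta> m i j = (if i = j then dcoef \<gamma> \<alpha> \<beta> m i else 0)"

definition Gmat :: "real \<Rightarrow> real \<Rightarrow> real \<Rightarrow> nat \<Rightarrow> nat \<Rightarrow> nat \<Rightarrow> real" where
  "Gmat \<gamma> \<alpha> \<beta> m i j =
     integral {\<alpha>..\<beta>} (\<lambda>y. qbasis \<alpha> \<beta> m j y * \<bar>node \<alpha> \<beta> m (real i / 2) - y\<bar> powr (- \<gamma>))"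

text \<open>Known fact (earlier work): all g_ij > 0 and D - G strictly diagonally dominant by rows.\<close>
definition known_fact :: "real \<Rightarrow> real \<Rightarrow> real \<Rightarrow> nat \<Rightarrow> bool" where
  "known_fact \<gamma> \<alpha> \<beta> m \<longleftrightarrow>
     (\<forall>i\<in>idx m. \<forall>j\<in>idx m. Gmat \<gamma> \<alpha> \<beta> m i j > 0) \<and>
     (\<forall>i\<in>idx m. \<bar>Dmat \<gamma> \<alpha> \<beta> m i i - Gmat \<gamma> \<alpha> \<beta> m i i\<bar>
        > (\<Sum>j\<in>idx m - {i}. \<bar>Dmat \<gamma> \<alpha> \<beta> m i j - Gmat \<gamma> \<alpha> \<beta> m i j\<bar>))"

text \<open>Action of A^x = D_x (x) D_y - G_x (x) G_y on a vector indexed by idx Mx \<times> idx My.\<close>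
definition Amul :: "real \<Rightarrow> real \<Rightarrow> real \<Rightarrow> real \<Rightarrow> real \<Rightarrow> nat \<Rightarrow> nat
                    \<Rightarrow> (nat \<times> nat \<Rightarrow> real) \<Rightarrow> nat \<times> nat \<Rightarrow> real" where
  "Amul \<gamma> a b c d Mx My v p =
     (\<Sum>q\<in>idx Mx \<times> idx My.
        (Dmat \<gamma> a b Mx (fst p) (fst q) * Dmat \<gamma> c d My (snd p) (snd q)
         - Gmat \<gamma> a b Mx (fst p) (fst q) * Gmat \<gamma> c d My (snd p) (snd q)) * v q)"

definition supnorm :: "'a set \<Rightarrow> ('a \<Rightarrow> real) \<Rightarrow> real" where
  "supnorm I v = Max ((\<lambda>p. \<bar>v p\<bar>) ` I)"

end

theory Submission
  imports Defs
begin

text \<open>In one dimension, \<open>0 \<le> \<Sum>\<^sub>k g\<^sub>i\<^sub>k \<le> d\<^sub>i \<le> 2(\<beta> - \<alpha>)\<^bsup>1-\<gamma>\<^esup>/(1 - \<gamma>)\<close>: the off-diagonal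
  entries are controlled by the diagonal dominance of \<open>D - G\<close>, and \<open>g\<^sub>i\<^sub>i \<le> d\<^sub>i\<close> because the
  quadratic basis functions are bounded by 1. Hence in row \<open>p = (i, j)\<close> of
  \<open>A = D\<^sub>x \<otimes> D\<^sub>y - G\<^sub>x \<otimes> G\<^sub>y\<close> the off-diagonal absolute sum is
  \<open>s = (\<Sum>g\<^sup>x) (\<Sum>g\<^sup>y) - g\<^sup>x\<^sub>i\<^sub>i g\<^sup>y\<^sub>j\<^sub>j\<close>, which is at most both \<open>A\<^sub>p\<^sub>p\<close> and \<open>d\<^sup>x\<^sub>i d\<^sup>y\<^sub>j \<le> C\<^sub>d\<close>.
  At an entry where \<open>|\<epsilon>\<^sup>k|\<close> is maximal, a Crank--Nicolson step with \<open>t = \<tau>/2\<close>, \<open>a = A\<^sub>p\<^sub>p\<close> gives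
  \<open>(1 + t(a - s)) \<parallel>\<epsilon>\<^sup>k\<parallel> \<le> (|1 - ta| + ts) \<parallel>\<epsilon>\<^sup>k\<^sup>-\<^sup>1\<parallel> \<le> (1 + 2ts)(1 + t(a - s)) \<parallel>\<epsilon>\<^sup>k\<^sup>-\<^sup>1\<parallel>\<close>
  for every \<open>\<tau>\<close>, so \<open>\<parallel>\<epsilon>\<^sup>k\<parallel> \<le> (1 + \<tau>C\<^sub>d)\<^sup>k \<parallel>\<epsilon>\<^sup>0\<parallel> \<le> exp(TC\<^sub>d) \<parallel>\<epsilon>\<^sup>0\<parallel>\<close>.\<close>

lemma has_integral_abs_diff_powr_right:
  fixes \<gamma> x \<beta> :: real
  assumes "\<gamma> < 1" and "x \<le> \<beta>"
  shows "((\<lambda>y. \<bar>x - y\<bar> powr - \<gamma>) has_integral (\<beta> - x) powr (1 - \<gamma>) / (1 - \<gamma>)) {x..\<beta>}"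
proof -
  define F where "F y = (y - x) powr (1 - \<gamma>) / (1 - \<gamma>)" for y
  have cont: "continuous_on {x..\<beta>} F"
    unfolding F_def by (intro continuous_intros continuous_on_powr') (use assms in auto)
  have deriv: "(F has_vector_derivative \<bar>x - y\<bar> powr - \<gamma>) (at y)" if "y \<in> {x<..<\<beta>}" for y
  proof -
    have "((\<lambda>y. (y - x) powr (1 - \<gamma>)) has_real_derivative (1 - \<gamma>) * (y - x) powr (1 - \<gamma> - 1)) (at y)"
      using that by (auto intro!: derivative_eq_intros)
    then have "(F has_real_derivative (1 - \<gamma>) * (y - x) powr (1 - \<gamma> - 1) / (1 - \<gamma>)) (at y)"
      unfolding F_def by (rule DERIV_cdivide)
    moreover have "(1 - \<gamma>) * (y - x) powr (1 - \<gamma> - 1) / (1 - \<gamma>) = \<bar>x - y\<bar> powr - \<gamma>"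
      using that assms by simp
    ultimately show ?thesis by (simp add: has_real_derivative_iff_has_vector_derivative)
  qed
  have "((\<lambda>y. \<bar>x - y\<bar> powr - \<gamma>) has_integral F \<beta> - F x) {x..\<beta>}"
    by (rule fundamental_theorem_of_calculus_interior[OF assms(2) cont deriv])
  then show ?thesis using assms by (simp add: F_def)
qed

lemma has_integral_abs_diff_powr_left:
  fixes \<gamma> x \<alpha> :: real
  assumes "\<gamma> < 1" and "\<alpha> \<le> x"
  shows "((\<lambda>y. \<bar>x - y\<bar> powr - \<gamma>) has_integral (x - \<alpha>) powr (1 - \<gamma>) / (1 - \<gamma>)) {\<alpha>..x}"
  using has_integral_reflect_lemma_real[OF has_integral_abs_diff_powr_right[of \<gamma> "- x" "- \<alpha>"]] assms
  by (simp add: abs_minus_commute)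

lemma has_integral_abs_diff_powr:
  fixes \<gamma> x \<alpha> \<beta> :: real
  assumes "\<gamma> < 1" and "\<alpha> \<le> x" and "x \<le> \<beta>"
  shows "((\<lambda>y. \<bar>x - y\<bar> powr - \<gamma>) has_integral
           ((x - \<alpha>) powr (1 - \<gamma>) + (\<beta> - x) powr (1 - \<gamma>)) / (1 - \<gamma>)) {\<alpha>..\<beta>}"
  using has_integral_combine[OF assms(2,3) has_integral_abs_diff_powr_left has_integral_abs_diff_powr_right]
    assms by (simp add: add_divide_distrib)

lemma integral_abs_diff_powr_le:
  fixes \<gamma> x \<alpha> \<beta> :: real
  assumes "0 < \<gamma>" and "\<gamma> < 1" and "\<alpha> \<le> x" and "x \<le> \<beta>"
  shows "integral {\<alpha>..\<beta>} (\<lambda>y. \<bar>x - y\<bar> powr - \<gamma>) \<le> 2 * (\<beta> - \<alpha>) powr (1 - \<gamma>) / (1 - \<gamma>)"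
proof -
  have "(x - \<alpha>) powr (1 - \<gamma>) \<le> (\<beta> - \<alpha>) powr (1 - \<gamma>)" "(\<beta> - x) powr (1 - \<gamma>) \<le> (\<beta> - \<alpha>) powr (1 - \<gamma>)"
    using assms by (auto intro!: powr_mono2)
  then show ?thesis
    using integral_unique[OF has_integral_abs_diff_powr[OF assms(2-4)]] assms(2)
    by (simp add: divide_right_mono)
qed

lemma node_mem_interval:
  assumes "\<alpha> < \<beta>" and "i \<in> idx m"
  shows "node \<alpha> \<beta> m (real i / 2) \<in> {\<alpha>..\<beta>}"
proof -
  have i: "1 \<le> i" "i \<le> 2 * m - 1" using assms(2) by (auto simp: idx_def)
  then have "real i / 2 * ((\<beta> - \<alpha>) / real m) \<le> real m * ((\<beta> - \<alpha>) / real m)"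
    using assms(1) by (intro mult_right_mono) auto
  with i assms(1) show ?thesis by (simp add: node_def)
qed

lemma dcoef_le:
  assumes "0 < \<gamma>" and "\<gamma> < 1" and "\<alpha> < \<beta>" and "i \<in> idx m"
  shows "dcoef \<gamma> \<alpha> \<beta> m i \<le> 2 * (\<beta> - \<alpha>) powr (1 - \<gamma>) / (1 - \<gamma>)"
  using node_mem_interval[OF assms(3,4)] integral_abs_diff_powr_le[OF assms(1,2)]
  by (simp add: dcoef_def)

lemma mult_two_mult_minus_one_le_one: "0 \<le> (u::real) \<Longrightarrow> u \<le> 1 \<Longrightarrow> u * (2 * u - 1) \<le> 1"
  using mult_left_mono[of "2 * u - 1" 1 u] by simp

lemma qbasis_le_one:
  assumes "\<alpha> < \<beta>" and "0 < m"
  shows "qbasis \<alpha> \<beta> m j y \<le> 1"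
proof -
  define h where "h = (\<beta> - \<alpha>) / real m"
  have h: "0 < h" using assms by (simp add: h_def)
  have node: "node \<alpha> \<beta> m s = \<alpha> + s * h" for s by (simp add: node_def h_def)
  have rising: "((y - (\<alpha> + (l - 1) * h)) / h) * ((2 * y - ((\<alpha> + l * h) + (\<alpha> + (l - 1) * h))) / h) \<le> 1"
    if "\<alpha> + (l - 1) * h \<le> y" "y \<le> \<alpha> + l * h" for l
  proof -
    define u where "u = (y - (\<alpha> + (l - 1) * h)) / h"
    have u: "0 \<le> u" "u \<le> 1" using that h by (auto simp: u_def field_simps)
    have "(2 * y - ((\<alpha> + l * h) + (\<alpha> + (l - 1) * h))) / h = 2 * u - 1"
      using h by (simp add: u_def field_simps)
    then show ?thesis using mult_two_mult_minus_one_le_one[OF u] by (simp add: u_def)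
  qed
  have falling: "((\<alpha> + (l + 1) * h - y) / h) * (((\<alpha> + (l + 1) * h + (\<alpha> + l * h)) - 2 * y) / h) \<le> 1"
    if "\<alpha> + l * h \<le> y" "y \<le> \<alpha> + (l + 1) * h" for l
  proof -
    define u where "u = (\<alpha> + (l + 1) * h - y) / h"
    have u: "0 \<le> u" "u \<le> 1" using that h by (auto simp: u_def field_simps)
    have "((\<alpha> + (l + 1) * h + (\<alpha> + l * h)) - 2 * y) / h = 2 * u - 1"
      using h by (simp add: u_def field_simps)
    then show ?thesis using mult_two_mult_minus_one_le_one[OF u] by (simp add: u_def)
  qed
  have bubble: "4 * (y - (\<alpha> + (l - 1) * h)) * ((\<alpha> + l * h) - y) / h\<^sup>2 \<le> 1" for l
  proof -
    have "h\<^sup>2 - 4 * (y - (\<alpha> + (l - 1) * h)) * ((\<alpha> + l * h) - y)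
          = (2 * y - (\<alpha> + (l - 1) * h) - (\<alpha> + l * h))\<^sup>2"
      by (simp add: power2_eq_square algebra_simps)
    then have "4 * (y - (\<alpha> + (l - 1) * h)) * ((\<alpha> + l * h) - y) \<le> h\<^sup>2"
      by (metis diff_ge_0_iff_ge zero_le_power2)
    then show ?thesis using h by (simp add: divide_le_eq)
  qed
  show ?thesis
  proof (cases "even j")
    case True
    then show ?thesis
      using rising[of "real (j div 2)"] falling[of "real (j div 2)"]
      by (simp add: qbasis_def Let_def h_def[symmetric] node)
  next
    case False
    then show ?thesis
      using bubble[of "real ((j + 1) div 2)"]
      by (simp add: qbasis_def Let_def h_def[symmetric] node)
  qed
qed

lemma Gmat_diag_le_Dmat_diag:
  assumes "0 < \<gamma>" and "\<gamma> < 1" and "\<alpha> < \<beta>" and "i \<in> idx m"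
    and "Gmat \<gamma> \<alpha> \<beta> m i i \<noteq> 0"
  shows "Gmat \<gamma> \<alpha> \<beta> m i i \<le> Dmat \<gamma> \<alpha> \<beta> m i i"
proof -
  define x where "x = node \<alpha> \<beta> m (real i / 2)"
  have x: "\<alpha> \<le> x" "x \<le> \<beta>" using node_mem_interval[OF assms(3,4)] by (simp_all add: x_def)
  have m: "0 < m" using assms(4) by (auto simp: idx_def)
  \<comment> \<open>A nonzero integral certifies integrability of the product with the basis function.\<close>
  have "(\<lambda>y. qbasis \<alpha> \<beta> m i y * \<bar>x - y\<bar> powr - \<gamma>) integrable_on {\<alpha>..\<beta>}"
    using assms(5) not_integrable_integral unfolding Gmat_def x_def by fastforce
  moreover have "(\<lambda>y. \<bar>x - y\<bar> powr - \<gamma>) integrable_on {\<alpha>..\<beta>}"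
    using has_integral_abs_diff_powr[OF assms(2) x] by (rule has_integral_integrable)
  moreover have "qbasis \<alpha> \<beta> m i y * \<bar>x - y\<bar> powr - \<gamma> \<le> \<bar>x - y\<bar> powr - \<gamma>" for y
    using mult_right_mono[OF qbasis_le_one[OF assms(3) m], of "\<bar>x - y\<bar> powr - \<gamma>"] by simp
  ultimately have "integral {\<alpha>..\<beta>} (\<lambda>y. qbasis \<alpha> \<beta> m i y * \<bar>x - y\<bar> powr - \<gamma>)
                   \<le> integral {\<alpha>..\<beta>} (\<lambda>y. \<bar>x - y\<bar> powr - \<gamma>)"
    by (rule integral_le)
  then show ?thesis by (simp add: Gmat_def Dmat_def dcoef_def x_def)
qed

lemma sum_Gmat_row_le_Dmat_diag:
  assumes "0 < \<gamma>" and "\<gamma> < 1" and "\<alpha> < \<beta>" and "known_fact \<gamma> \<alpha> \<beta> m" and i: "i \<in> idx m"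
  shows "(\<Sum>k\<in>idx m. Gmat \<gamma> \<alpha> \<beta> m i k) \<le> Dmat \<gamma> \<alpha> \<beta> m i i"
proof -
  have pos: "\<forall>k\<in>idx m. 0 < Gmat \<gamma> \<alpha> \<beta> m i k"
    and dominant: "(\<Sum>k\<in>idx m - {i}. \<bar>Dmat \<gamma> \<alpha> \<beta> m i k - Gmat \<gamma> \<alpha> \<beta> m i k\<bar>)
                   < \<bar>Dmat \<gamma> \<alpha> \<beta> m i i - Gmat \<gamma> \<alpha> \<beta> m i i\<bar>"
    using assms(4) i by (auto simp: known_fact_def)
  have "(\<Sum>k\<in>idx m - {i}. \<bar>Dmat \<gamma> \<alpha> \<beta> m i k - Gmat \<gamma> \<alpha> \<beta> m i k\<bar>)
        = (\<Sum>k\<in>idx m - {i}. Gmat \<gamma> \<alpha> \<beta> m i k)"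
    using pos by (intro sum.cong) (auto simp: Dmat_def)
  moreover have "Gmat \<gamma> \<alpha> \<beta> m i i \<le> Dmat \<gamma> \<alpha> \<beta> m i i"
    using Gmat_diag_le_Dmat_diag[OF assms(1-3) i] pos i by auto
  moreover have "(\<Sum>k\<in>idx m. Gmat \<gamma> \<alpha> \<beta> m i k)
                 = Gmat \<gamma> \<alpha> \<beta> m i i + (\<Sum>k\<in>idx m - {i}. Gmat \<gamma> \<alpha> \<beta> m i k)"
    using i by (simp add: idx_def sum.remove)
  ultimately show ?thesis using dominant by simp
qed

definition kron_diff ::
    "('a \<Rightarrow> 'a \<Rightarrow> real) \<Rightarrow> ('a \<Rightarrow> 'a \<Rightarrow> real) \<Rightarrow> ('b \<Rightarrow> 'b \<Rightarrow> real) \<Rightarrow> ('b \<Rightarrow> 'b \<Rightarrow> real)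
     \<Rightarrow> 'a \<times> 'b \<Rightarrow> 'a \<times> 'b \<Rightarrow> real" where
  "kron_diff Dx Gx Dy Gy p q =
     Dx (fst p) (fst q) * Dy (snd p) (snd q) - Gx (fst p) (fst q) * Gy (snd p) (snd q)"

lemma Amul_eq_kron_diff:
  "Amul \<gamma> a b c d Mx My v p =
     (\<Sum>q\<in>idx Mx \<times> idx My.
        kron_diff (Dmat \<gamma> a b Mx) (Gmat \<gamma> a b Mx) (Dmat \<gamma> c d My) (Gmat \<gamma> c d My) p q * v q)"
  by (simp add: Amul_def kron_diff_def)

lemma kron_diff_offdiag_row_sum:
  fixes Dx Gx :: "'a \<Rightarrow> 'a \<Rightarrow> real" and Dy Gy :: "'b \<Rightarrow> 'b \<Rightarrow> real"
  assumes "finite J" and "finite K" and "i \<in> J" and "j \<in> K"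
    and "\<And>k. k \<noteq> i \<Longrightarrow> Dx i k = 0" and "\<And>l. l \<noteq> j \<Longrightarrow> Dy j l = 0"
    and "\<And>k. k \<in> J \<Longrightarrow> 0 < Gx i k" and "\<And>l. l \<in> K \<Longrightarrow> 0 < Gy j l"
  shows "(\<Sum>q\<in>J \<times> K - {(i, j)}. \<bar>kron_diff Dx Gx Dy Gy (i, j) q\<bar>)
         = (\<Sum>k\<in>J. Gx i k) * (\<Sum>l\<in>K. Gy j l) - Gx i i * Gy j j"
proof -
  have "(\<Sum>q\<in>J \<times> K - {(i, j)}. \<bar>kron_diff Dx Gx Dy Gy (i, j) q\<bar>)
        = (\<Sum>q\<in>J \<times> K - {(i, j)}. Gx i (fst q) * Gy j (snd q))"
  proof (rule sum.cong)
    fix q assume q: "q \<in> J \<times> K - {(i, j)}"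
    then have diag: "Dx i (fst q) * Dy j (snd q) = 0"
      using assms(5,6) by (cases q) auto
    have "0 < Gx i (fst q) * Gy j (snd q)"
      using q assms(7,8) by (auto intro: mult_pos_pos)
    then show "\<bar>kron_diff Dx Gx Dy Gy (i, j) q\<bar> = Gx i (fst q) * Gy j (snd q)"
      unfolding kron_diff_def fst_conv snd_conv diag by simp
  qed simp
  also have "\<dots> = (\<Sum>q\<in>J \<times> K. Gx i (fst q) * Gy j (snd q)) - Gx i i * Gy j j"
    using assms(1-4) by (simp add: sum_diff1)
  also have "(\<Sum>q\<in>J \<times> K. Gx i (fst q) * Gy j (snd q)) = (\<Sum>k\<in>J. Gx i k) * (\<Sum>l\<in>K. Gy j l)"
    by (simp add: sum_product sum.cartesian_product case_prod_beta)
  finally show ?thesis .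
qed

lemma kron_diff_row_diagonally_dominant:
  fixes Dx Gx :: "'a \<Rightarrow> 'a \<Rightarrow> real" and Dy Gy :: "'b \<Rightarrow> 'b \<Rightarrow> real"
  assumes "finite J" and "finite K" and "i \<in> J" and "j \<in> K"
    and "\<And>k. k \<noteq> i \<Longrightarrow> Dx i k = 0" and "\<And>l. l \<noteq> j \<Longrightarrow> Dy j l = 0"
    and "\<And>k. k \<in> J \<Longrightarrow> 0 < Gx i k" and "\<And>l. l \<in> K \<Longrightarrow> 0 < Gy j l"
    and "(\<Sum>k\<in>J. Gx i k) \<le> Dx i i" and "(\<Sum>l\<in>K. Gy j l) \<le> Dy j j"
  shows "(\<Sum>q\<in>J \<times> K - {(i, j)}. \<bar>kron_diff Dx Gx Dy Gy (i, j) q\<bar>) \<le> kron_diff Dx Gx Dy Gy (i, j) (i, j)"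
    and "(\<Sum>q\<in>J \<times> K - {(i, j)}. \<bar>kron_diff Dx Gx Dy Gy (i, j) q\<bar>) \<le> Dx i i * Dy j j"
proof -
  have "0 \<le> (\<Sum>k\<in>J. Gx i k)" "0 \<le> (\<Sum>l\<in>K. Gy j l)" and diag: "0 < Gx i i * Gy j j"
    using assms(3,4,7,8) by (auto intro: sum_nonneg less_imp_le)
  then have sums: "(\<Sum>k\<in>J. Gx i k) * (\<Sum>l\<in>K. Gy j l) \<le> Dx i i * Dy j j"
    using assms(9,10) by (intro mult_mono) auto
  have offdiag: "(\<Sum>q\<in>J \<times> K - {(i, j)}. \<bar>kron_diff Dx Gx Dy Gy (i, j) q\<bar>)
                 = (\<Sum>k\<in>J. Gx i k) * (\<Sum>l\<in>K. Gy j l) - Gx i i * Gy j j"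
    by (rule kron_diff_offdiag_row_sum) (use assms in auto)
  show "(\<Sum>q\<in>J \<times> K - {(i, j)}. \<bar>kron_diff Dx Gx Dy Gy (i, j) q\<bar>) \<le> kron_diff Dx Gx Dy Gy (i, j) (i, j)"
    using sums unfolding offdiag by (simp add: kron_diff_def)
  show "(\<Sum>q\<in>J \<times> K - {(i, j)}. \<bar>kron_diff Dx Gx Dy Gy (i, j) q\<bar>) \<le> Dx i i * Dy j j"
    using sums diag unfolding offdiag by linarith
qed

lemma kron_Dmat_Gmat_row_bounds:
  assumes "0 < \<gamma>" and "\<gamma> < 1" and "a < b" and "c < d"
    and "known_fact \<gamma> a b Mx" and "known_fact \<gamma> c d My"
    and i: "i \<in> idx Mx" and j: "j \<in> idx My"
  defines "A \<equiv> kron_diff (Dmat \<gamma> a b Mx) (Gmat \<gamma> a b Mx) (Dmat \<gamma> c d My) (Gmat \<gamma> c d My)"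
  shows "(\<Sum>q\<in>idx Mx \<times> idx My - {(i, j)}. \<bar>A (i, j) q\<bar>) \<le> A (i, j) (i, j)"
    and "(\<Sum>q\<in>idx Mx \<times> idx My - {(i, j)}. \<bar>A (i, j) q\<bar>)
         \<le> 2 * (b - a) powr (1 - \<gamma>) / (1 - \<gamma>) * (2 * (d - c) powr (1 - \<gamma>) / (1 - \<gamma>))"
proof -
  have fin: "finite (idx Mx)" "finite (idx My)" by (simp_all add: idx_def)
  have offdiag: "\<And>k. k \<noteq> i \<Longrightarrow> Dmat \<gamma> a b Mx i k = 0" "\<And>l. l \<noteq> j \<Longrightarrow> Dmat \<gamma> c d My j l = 0"
    by (simp_all add: Dmat_def)
  have pos: "\<And>k. k \<in> idx Mx \<Longrightarrow> 0 < Gmat \<gamma> a b Mx i k" "\<And>l. l \<in> idx My \<Longrightarrow> 0 < Gmat \<gamma> c d My j l"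
    using assms(5,6) i j by (simp_all add: known_fact_def)
  have rows: "(\<Sum>k\<in>idx Mx. Gmat \<gamma> a b Mx i k) \<le> Dmat \<gamma> a b Mx i i"
    "(\<Sum>l\<in>idx My. Gmat \<gamma> c d My j l) \<le> Dmat \<gamma> c d My j j"
    using sum_Gmat_row_le_Dmat_diag assms(1-6) i j by blast+
  note dominant = kron_diff_row_diagonally_dominant[where Dx = "Dmat \<gamma> a b Mx" and Gx = "Gmat \<gamma> a b Mx"
      and Dy = "Dmat \<gamma> c d My" and Gy = "Gmat \<gamma> c d My", OF fin i j offdiag pos rows]
  show "(\<Sum>q\<in>idx Mx \<times> idx My - {(i, j)}. \<bar>A (i, j) q\<bar>) \<le> A (i, j) (i, j)"
    unfolding A_def by (rule dominant(1))
  have "0 \<le> Dmat \<gamma> a b Mx i i" "0 \<le> Dmat \<gamma> c d My j j"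
    using order_trans[OF sum_nonneg rows(1)] order_trans[OF sum_nonneg rows(2)] pos
    by (auto intro: less_imp_le)
  moreover have "Dmat \<gamma> a b Mx i i \<le> 2 * (b - a) powr (1 - \<gamma>) / (1 - \<gamma>)"
    "Dmat \<gamma> c d My j j \<le> 2 * (d - c) powr (1 - \<gamma>) / (1 - \<gamma>)"
    using dcoef_le assms(1-4) i j by (simp_all add: Dmat_def)
  ultimately have "Dmat \<gamma> a b Mx i i * Dmat \<gamma> c d My j j
        \<le> 2 * (b - a) powr (1 - \<gamma>) / (1 - \<gamma>) * (2 * (d - c) powr (1 - \<gamma>) / (1 - \<gamma>))"
    by (intro mult_mono) auto
  then show "(\<Sum>q\<in>idx Mx \<times> idx My - {(i, j)}. \<bar>A (i, j) q\<bar>)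
         \<le> 2 * (b - a) powr (1 - \<gamma>) / (1 - \<gamma>) * (2 * (d - c) powr (1 - \<gamma>) / (1 - \<gamma>))"
    unfolding A_def using dominant(2) by linarith
qed

lemma supnorm_ge: "finite I \<Longrightarrow> q \<in> I \<Longrightarrow> \<bar>v q\<bar> \<le> supnorm I v"
  unfolding supnorm_def by (rule Max_ge) auto

lemma supnorm_nonneg: "finite I \<Longrightarrow> I \<noteq> {} \<Longrightarrow> 0 \<le> supnorm I v"
  using supnorm_ge[of I _ v] by (meson abs_ge_zero all_not_in_conv order.trans)

lemma supnorm_attained:
  assumes "finite I" and "I \<noteq> {}"
  obtains p where "p \<in> I" and "\<bar>v p\<bar> = supnorm I v"
proof -
  have "Max ((\<lambda>p. \<bar>v p\<bar>) ` I) \<in> (\<lambda>p. \<bar>v p\<bar>) ` I" using assms by (intro Max_in) auto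
  then show ?thesis using that unfolding supnorm_def by auto
qed

lemma abs_offdiag_sum_le:
  assumes "finite I"
  shows "\<bar>\<Sum>q\<in>I - {p}. A p q * u q\<bar> \<le> (\<Sum>q\<in>I - {p}. \<bar>A p q\<bar>) * supnorm I u"
proof -
  have "\<bar>\<Sum>q\<in>I - {p}. A p q * u q\<bar> \<le> (\<Sum>q\<in>I - {p}. \<bar>A p q\<bar> * \<bar>u q\<bar>)"
    by (rule order.trans[OF sum_abs]) (simp add: abs_mult)
  also have "\<dots> \<le> (\<Sum>q\<in>I - {p}. \<bar>A p q\<bar> * supnorm I u)"
    using assms by (intro sum_mono mult_left_mono supnorm_ge) auto
  finally show ?thesis by (simp add: sum_distrib_right)
qed

lemma crank_nicolson_amplification_le:
  fixes t a s :: real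
  assumes "0 \<le> t" and "0 \<le> s" and "s \<le> a"
  shows "\<bar>1 - t * a\<bar> + t * s \<le> (1 + 2 * t * s) * (1 + t * (a - s))"
proof -
  have "0 \<le> 2 * t * s * (t * (a - s))" using assms by simp
  moreover have "\<bar>1 - t * a\<bar> \<le> 1 + t * a" using assms mult_nonneg_nonneg[of t a] by linarith
  ultimately show ?thesis by (simp add: algebra_simps)
qed

lemma crank_nicolson_step_supnorm_le:
  fixes A :: "'a \<Rightarrow> 'a \<Rightarrow> real" and v w :: "'a \<Rightarrow> real"
  assumes fin: "finite I" and ne: "I \<noteq> {}" and t: "0 \<le> t"
    and dominant: "\<And>p. p \<in> I \<Longrightarrow> (\<Sum>q\<in>I - {p}. \<bar>A p q\<bar>) \<le> A p p"
    and bounded: "\<And>p. p \<in> I \<Longrightarrow> (\<Sum>q\<in>I - {p}. \<bar>A p q\<bar>) \<le> C"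
    and step: "\<And>p. p \<in> I \<Longrightarrow>
                 v p + t * (\<Sum>q\<in>I. A p q * v q) = w p - t * (\<Sum>q\<in>I. A p q * w q)"
  shows "supnorm I v \<le> (1 + 2 * t * C) * supnorm I w"
proof -
  define V W where "V = supnorm I v" and "W = supnorm I w"
  obtain p where p: "p \<in> I" "\<bar>v p\<bar> = V" using supnorm_attained[OF fin ne] V_def by metis
  define a s where "a = A p p" and "s = (\<Sum>q\<in>I - {p}. \<bar>A p q\<bar>)"
  define Rv Rw where "Rv = (\<Sum>q\<in>I - {p}. A p q * v q)" and "Rw = (\<Sum>q\<in>I - {p}. A p q * w q)"
  have s: "0 \<le> s" "s \<le> a" "s \<le> C" using dominant[OF p(1)] bounded[OF p(1)]
    by (auto simp: a_def s_def intro: sum_nonneg)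
  have W: "0 \<le> W" "\<bar>w p\<bar> \<le> W" using supnorm_nonneg[OF fin ne] supnorm_ge[OF fin p(1)] W_def by auto
  have R: "\<bar>Rv\<bar> \<le> s * V" "\<bar>Rw\<bar> \<le> s * W"
    using abs_offdiag_sum_le[OF fin] by (simp_all add: Rv_def Rw_def s_def V_def W_def)
  have "(1 + t * a) * v p = (1 - t * a) * w p - t * Rw - t * Rv"
    using step[OF p(1)] fin p(1)
    by (simp add: Rv_def Rw_def a_def sum.remove algebra_simps)
  moreover have "0 \<le> 1 + t * a" using t s by simp
  ultimately have "(1 + t * a) * V = \<bar>(1 - t * a) * w p - t * Rw - t * Rv\<bar>"
    using p(2) by (metis abs_mult abs_of_nonneg)
  also have "\<dots> \<le> \<bar>1 - t * a\<bar> * \<bar>w p\<bar> + t * \<bar>Rw\<bar> + t * \<bar>Rv\<bar>"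
    using t by (simp add: abs_mult abs_triangle_ineq4 order_trans[OF abs_triangle_ineq4] add_mono)
  also have "\<dots> \<le> \<bar>1 - t * a\<bar> * W + t * (s * W) + t * (s * V)"
    using W(2) R t by (intro add_mono mult_left_mono) auto
  finally have "(1 + t * a) * V - t * (s * V) \<le> \<bar>1 - t * a\<bar> * W + t * (s * W)"
    by simp
  also have "\<dots> \<le> ((1 + 2 * t * s) * (1 + t * (a - s))) * W"
    using crank_nicolson_amplification_le[OF t s(1,2)] W(1)
    by (metis distrib_right mult.assoc mult_right_mono)
  finally have "(1 + t * (a - s)) * V \<le> (1 + t * (a - s)) * ((1 + 2 * t * s) * W)"
    by (simp add: algebra_simps)
  moreover have "0 < 1 + t * (a - s)" using t s by (simp add: add_pos_nonneg)
  ultimately have "V \<le> (1 + 2 * t * s) * W" by simp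
  also have "\<dots> \<le> (1 + 2 * t * C) * W"
    using s(3) t W(1) by (intro mult_right_mono) (auto intro: mult_left_mono)
  finally show ?thesis by (simp add: V_def W_def)
qed

lemma growth_le_exp:
  fixes x :: "nat \<Rightarrow> real" and c :: real
  assumes "0 \<le> c" and "\<And>k. 0 \<le> x k"
    and "\<And>k. 1 \<le> k \<Longrightarrow> k \<le> N \<Longrightarrow> x k \<le> (1 + c) * x (k - 1)"
  shows "k \<le> N \<Longrightarrow> x k \<le> exp (real k * c) * x 0"
proof (induction k)
  case (Suc k)
  have "x (Suc k) \<le> (1 + c) * x k" using assms(3)[of "Suc k"] Suc.prems by simp
  also have "\<dots> \<le> exp c * (exp (real k * c) * x 0)"
    using Suc assms(1,2) by (intro mult_mono exp_ge_add_one_self) auto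
  also have "\<dots> = exp (real (Suc k) * c) * x 0"
    by (simp add: distrib_right exp_add)
  finally show ?case .
qed simp

lemma crank_nicolson_supnorm_le_exp:
  fixes A :: "'a \<Rightarrow> 'a \<Rightarrow> real" and \<epsilon> :: "nat \<Rightarrow> 'a \<Rightarrow> real" and T C :: real
  assumes fin: "finite I" and ne: "I \<noteq> {}" and T: "0 \<le> T"
    and dominant: "\<And>p. p \<in> I \<Longrightarrow> (\<Sum>q\<in>I - {p}. \<bar>A p q\<bar>) \<le> A p p"
    and bounded: "\<And>p. p \<in> I \<Longrightarrow> (\<Sum>q\<in>I - {p}. \<bar>A p q\<bar>) \<le> C"
    and scheme: "\<And>j p. 1 \<le> j \<Longrightarrow> j \<le> N \<Longrightarrow> p \<in> I \<Longrightarrow>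
           \<epsilon> j p + T / real N / 2 * (\<Sum>q\<in>I. A p q * \<epsilon> j q)
         = \<epsilon> (j - 1) p - T / real N / 2 * (\<Sum>q\<in>I. A p q * \<epsilon> (j - 1) q)"
    and "k \<le> N"
  shows "supnorm I (\<epsilon> k) \<le> exp (T * C) * supnorm I (\<epsilon> 0)"
proof -
  define t where "t = T / real N / 2"
  have t: "0 \<le> t" using T by (simp add: t_def)
  have C: "0 \<le> C"
    using ne bounded order_trans[OF sum_nonneg] by (metis abs_ge_zero ex_in_conv)
  have step: "supnorm I (\<epsilon> j) \<le> (1 + 2 * t * C) * supnorm I (\<epsilon> (j - 1))" if "1 \<le> j" "j \<le> N" for j
    using crank_nicolson_step_supnorm_le[OF fin ne t dominant bounded] scheme[OF that] t_def
    by blast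
  have "supnorm I (\<epsilon> k) \<le> exp (real k * (2 * t * C)) * supnorm I (\<epsilon> 0)"
    using growth_le_exp[where x = "\<lambda>j. supnorm I (\<epsilon> j)", OF _ supnorm_nonneg[OF fin ne] step]
      t C \<open>k \<le> N\<close> by simp
  also have "\<dots> \<le> exp (T * C) * supnorm I (\<epsilon> 0)"
  proof -
    have "real k * (2 * t) \<le> T"
      using \<open>k \<le> N\<close> T by (cases "N = 0") (simp_all add: t_def field_simps mult_left_mono)
    then have "real k * (2 * t * C) \<le> T * C"
      using C by (metis mult.assoc mult_right_mono)
    then show ?thesis using supnorm_nonneg[OF fin ne] by (intro mult_right_mono) auto
  qed
  finally show ?thesis .
qed

theorem theorem3p10:
  fixes \<gamma> a b c d T :: real and Mx My N :: nat and \<epsilon> :: "nat \<Rightarrow> nat \<times> nat \<Rightarrow> real"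
  assumes "0 < \<gamma>" "\<gamma> < 1" "a < b" "c < d" "2 \<le> Mx" "2 \<le> My" "0 < T" "1 \<le> N"
    and "known_fact \<gamma> a b Mx" and "known_fact \<gamma> c d My"
    and "\<forall>k\<in>{1..N}. \<forall>p\<in>idx Mx \<times> idx My.
           \<epsilon> k p + (T / real N) / 2 * Amul \<gamma> a b c d Mx My (\<epsilon> k) p
         = \<epsilon> (k - 1) p - (T / real N) / 2 * Amul \<gamma> a b c d Mx My (\<epsilon> (k - 1)) p"
  shows "\<forall>k\<le>N. supnorm (idx Mx \<times> idx My) (\<epsilon> k)
           \<le> exp (T * (4 * (b - a) powr (1 - \<gamma>) * (d - c) powr (1 - \<gamma>) / (1 - \<gamma>)\<^sup>2))
             * supnorm (idx Mx \<times> idx My) (\<epsilon> 0)"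
proof (intro allI impI)
  fix k assume "k \<le> N"
  define I where "I = idx Mx \<times> idx My"
  define A where "A = kron_diff (Dmat \<gamma> a b Mx) (Gmat \<gamma> a b Mx) (Dmat \<gamma> c d My) (Gmat \<gamma> c d My)"
  define C where "C = 2 * (b - a) powr (1 - \<gamma>) / (1 - \<gamma>) * (2 * (d - c) powr (1 - \<gamma>) / (1 - \<gamma>))"
  have I: "finite I" "I \<noteq> {}" using assms(5,6) by (auto simp: I_def idx_def)
  have rows: "(\<Sum>q\<in>I - {p}. \<bar>A p q\<bar>) \<le> A p p" "(\<Sum>q\<in>I - {p}. \<bar>A p q\<bar>) \<le> C" if "p \<in> I" for p
    using that kron_Dmat_Gmat_row_bounds[OF assms(1-4,9,10)] unfolding I_def A_def C_def
    by (metis mem_Sigma_iff prod.collapse)+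
  have scheme: "\<epsilon> j p + T / real N / 2 * (\<Sum>q\<in>I. A p q * \<epsilon> j q)
              = \<epsilon> (j - 1) p - T / real N / 2 * (\<Sum>q\<in>I. A p q * \<epsilon> (j - 1) q)"
    if "1 \<le> j" "j \<le> N" "p \<in> I" for j p
    using bspec[OF bspec[OF assms(11)], of j p] that unfolding I_def A_def Amul_eq_kron_diff by simp
  have "C = 4 * (b - a) powr (1 - \<gamma>) * (d - c) powr (1 - \<gamma>) / (1 - \<gamma>)\<^sup>2"
    by (simp add: C_def power2_eq_square)
  with crank_nicolson_supnorm_le_exp[where A = A and \<epsilon> = \<epsilon>,
         OF I less_imp_le[OF assms(7)] rows scheme \<open>k \<le> N\<close>]
  show "supnorm (idx Mx \<times> idx My) (\<epsilon> k)
           \<le> exp (T * (4 * (b - a) powr (1 - \<gamma>) * (d - c) powr (1 - \<gamma>) / (1 - \<gamma>)\<^sup>2))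
             * supnorm (idx Mx \<times> idx My) (\<epsilon> 0)"
    by (simp only: I_def)
qed

end
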